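(* Assume that $p_t\geq 1/2$ for all integers $t\geq 1$. Then $\tilde c_t\leq 1/2\leq c_t$ holds for all integers $t\geq 1$.
   Context: $s(n)$ denotes the binary sum of digits of $n\ge0$. For $t\ge0$, $c_t$ (resp. $\tilde c_t$) is the asymptotic density of $\{n\ge0: s(n+t)\ge s(n)\}$ (resp. $\{n\ge 0: s(n+t)>s(n)\}$). Define numbers $\varphi(k,t)$ for $k\in\mathbb{Z}$ and integers $t\ge1$ by $\varphi(0,1)=1$, $\varphi(k,1)=0$ for $k\neq0$, and for $t\ge1$: $\varphi(k,2t)=\varphi(k,t)$, $\varphi(k,2t+1)=\frac12\varphi(k-1,t)+\frac12\varphi(k+1,t+1)$. Set $p_t=\sum_{k\geq 0}\varphi(k,t)$ (a finite sum, since $\varphi(k,t)=0$ for $k\ge s(t)$). *)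

theory Defs
  imports Complex_Main
begin

fun bsum :: "nat \<Rightarrow> nat" where
  "bsum n = (if n = 0 then 0 else n mod 2 + bsum (n div 2))"

definition c :: "nat \<Rightarrow> real" where
  "c t = lim (\<lambda>N. real (card {n. n < N \<and> bsum (n + t) \<ge> bsum n}) / real N)"

definition ctilde :: "nat \<Rightarrow> real" where
  "ctilde t = lim (\<lambda>N. real (card {n. n < N \<and> bsum (n + t) > bsum n}) / real N)"

text \<open>phi(k,t) for integers k and t >= 1 (the value at t = 0 is irrelevant and set to 0).\<close>
function phi :: "int \<Rightarrow> nat \<Rightarrow> real" where
  "phi k t =
     (if t = 0 then 0
      else if t = 1 then (if k = 0 then 1 else 0)
      else if even t then phi k (t div 2)
      else phi (k - 1) (t div 2) / 2 + phi (k + 1) (t div 2 + 1) / 2)"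
  by pat_completeness auto
termination
  by (relation "measure snd") (auto elim!: oddE)

definition p :: "nat \<Rightarrow> real" where
  "p t = (\<Sum>k. phi (int k) t)"

end

theory Submission
  imports Defs "HOL-Analysis.Elementary_Metric_Spaces"
begin

text \<open>
  For \<open>t \<le> 2^M\<close> the recursion defining \<open>\<phi>\<close> is the recursion satisfied by the distribution of
  the gain \<open>s((r + t) mod 2^M) - s(r)\<close> over the residues \<open>r < 2^M\<close>: an even \<open>t\<close> leaves the last
  binary digit of \<open>r\<close> unchanged, while an odd \<open>t\<close> sets it (gain \<open>+1\<close>) or clears it with a
  carry (gain \<open>-1\<close>, and \<open>t + 1\<close> in place of \<open>t\<close>).
  Hence \<open>\<phi>(k, 2^M + t)\<close> is the proportion of residues with gain \<open>k\<close>, and \<open>p(2^M + t)\<close> the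
  proportion with gain \<open>\<ge> 0\<close>. After the shift \<open>r \<mapsto> (r + t) mod 2^M\<close>, the residues with
  positive gain form the complement of those counted by \<open>p(2^(M+1) - t)\<close>, so at most half of the
  residues have positive gain.
  Moreover \<open>s(n + t) - s(n)\<close> is the gain of \<open>n mod 2^M\<close> unless a carry runs past position \<open>M\<close>,
  which happens for at most \<open>t\<close> of the \<open>2^M\<close> residues; letting \<open>M \<rightarrow> \<infinity>\<close>, both densities exist
  and inherit the bounds \<open>\<ge> 1/2\<close> and \<open>\<le> 1/2\<close>.
\<close>

declare bsum.simps[simp del] phi.simps[simp del]

lemma bsum_eq: "bsum n = n mod 2 + bsum (n div 2)"
  by (cases "n = 0") (simp_all add: bsum.simps[of n] bsum.simps[of 0])

lemma bsum_0 [simp]: "bsum 0 = 0"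
  by (simp add: bsum.simps)

lemma bsum_double [simp]: "bsum (2 * n) = bsum n"
  using bsum_eq[of "2 * n"] by simp

lemma bsum_Suc_double [simp]: "bsum (Suc (2 * n)) = Suc (bsum n)"
  using bsum_eq[of "Suc (2 * n)"] by simp

lemma bsum_mult_power_add:
  assumes "r < 2 ^ M"
  shows "bsum (q * 2 ^ M + r) = bsum q + bsum r"
  using assms
proof (induction M arbitrary: r)
  case (Suc M)
  have "bsum (r + 2 * (q * 2 ^ M)) = r mod 2 + bsum (q * 2 ^ M + r div 2)"
    using bsum_eq[of "r + 2 * (q * 2 ^ M)"] by (simp add: add.commute)
  then show ?case
    using Suc bsum_eq[of r] by (simp add: ac_simps)
qed simp

lemma bsum_add_mult_power_add:
  assumes "r + t < 2 ^ M"
  shows "bsum (q * 2 ^ M + r + t) = bsum q + bsum ((r + t) mod 2 ^ M)"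
  using assms bsum_mult_power_add[of "r + t" M q] by (simp add: add.assoc)

lemma bsum_le_of_less_power: "n < 2 ^ M \<Longrightarrow> bsum n \<le> M"
proof (induction M arbitrary: n)
  case (Suc M)
  then have "bsum (n div 2) \<le> M"
    by simp
  then show ?case
    using bsum_eq[of n] by simp
qed simp

subsection \<open>The gain of the digit sum modulo a power of two\<close>

definition bsum_gain :: "nat \<Rightarrow> nat \<Rightarrow> nat \<Rightarrow> int" where
  "bsum_gain M t r = int (bsum ((r + t) mod 2 ^ M)) - int (bsum r)"

lemma bsum_gain_le: "bsum_gain M t r \<le> int M"
  using bsum_le_of_less_power[of "(r + t) mod 2 ^ M" M] by (simp add: bsum_gain_def)

lemma mod_double_power: "(2 * a :: nat) mod 2 ^ Suc M = 2 * (a mod 2 ^ M)"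
  by simp

lemma mod_Suc_double_power: "Suc (2 * a) mod 2 ^ Suc M = Suc (2 * (a mod 2 ^ M))"
  using mod_mult2_eq[of "Suc (2 * a)" 2 "2 ^ M"] by simp

lemma bsum_gain_even_even: "bsum_gain (Suc M) (2 * t) (2 * r) = bsum_gain M t r"
  using mod_double_power[of "r + t" M] by (simp add: bsum_gain_def distrib_left)

lemma bsum_gain_even_odd: "bsum_gain (Suc M) (2 * t) (Suc (2 * r)) = bsum_gain M t r"
  using mod_Suc_double_power[of "r + t" M] by (simp add: bsum_gain_def distrib_left)

lemma bsum_gain_odd_even: "bsum_gain (Suc M) (Suc (2 * t)) (2 * r) = bsum_gain M t r + 1"
  using mod_Suc_double_power[of "r + t" M] by (simp add: bsum_gain_def distrib_left)

lemma bsum_gain_odd_odd: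
  "bsum_gain (Suc M) (Suc (2 * t)) (Suc (2 * r)) = bsum_gain M (Suc t) r - 1"
  using mod_double_power[of "r + Suc t" M] by (simp add: bsum_gain_def distrib_left)

lemma card_less_double:
  fixes K :: nat
  shows "card {r. r < 2 * K \<and> Q r} = card {r. r < K \<and> Q (2 * r)} + card {r. r < K \<and> Q (Suc (2 * r))}"
proof -
  have "{r. r < 2 * K \<and> Q r} =
      (*) 2 ` {r. r < K \<and> Q (2 * r)} \<union> (\<lambda>r. Suc (2 * r)) ` {r. r < K \<and> Q (Suc (2 * r))}"
  proof (intro set_eqI iffI)
    fix x
    assume "x \<in> {r. r < 2 * K \<and> Q r}"
    then show "x \<in> (*) 2 ` {r. r < K \<and> Q (2 * r)} \<union> (\<lambda>r. Suc (2 * r)) ` {r. r < K \<and> Q (Suc (2 * r))}"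
      by (cases "even x") (auto elim!: evenE oddE)
  qed auto
  moreover have "(*) 2 ` A \<inter> (\<lambda>r. Suc (2 * r)) ` B = {}" for A B :: "nat set"
    by auto presburger
  ultimately show ?thesis
    by (simp add: card_Un_disjoint card_image inj_on_def)
qed

lemma card_bsum_gain_even:
  "card {r. r < 2 * 2 ^ M \<and> bsum_gain (Suc M) (2 * t) r = k} =
    2 * card {r. r < 2 ^ M \<and> bsum_gain M t r = k}"
  by (simp add: card_less_double bsum_gain_even_even bsum_gain_even_odd)

lemma card_bsum_gain_odd:
  "card {r. r < 2 * 2 ^ M \<and> bsum_gain (Suc M) (Suc (2 * t)) r = k} =
    card {r. r < 2 ^ M \<and> bsum_gain M t r = k - 1} +
    card {r. r < 2 ^ M \<and> bsum_gain M (Suc t) r = k + 1}"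
  by (simp add: card_less_double bsum_gain_odd_even bsum_gain_odd_odd eq_diff_eq diff_eq_eq)

subsection \<open>Combinatorial meaning of \<open>\<phi>\<close> and \<open>p\<close>\<close>

lemma phi_1: "phi k (Suc 0) = (if k = 0 then 1 else 0)"
  by (simp add: phi.simps)

lemma phi_even: "t > 0 \<Longrightarrow> phi k (2 * t) = phi k t"
  by (simp add: phi.simps[of k "2 * t"])

lemma phi_odd: "t > 0 \<Longrightarrow> phi k (Suc (2 * t)) = phi (k - 1) t / 2 + phi (k + 1) (Suc t) / 2"
  by (simp add: phi.simps[of k "Suc (2 * t)"])

lemma phi_eq_card_bsum_gain:
  assumes "t \<le> 2 ^ M"
  shows "phi k (2 ^ M + t) = card {r. r < 2 ^ M \<and> bsum_gain M t r = k} / 2 ^ M"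
  using assms
proof (induction M arbitrary: t k)
  case 0
  then have "phi k (2 ^ 0 + t) = phi k (Suc 0)"
    using phi_even[of "Suc 0" k] by (auto simp: le_Suc_eq numeral_2_eq_2)
  moreover have "{r. r < 2 ^ 0 \<and> bsum_gain 0 t r = k} = (if k = 0 then {0} else {})"
    by (auto simp: bsum_gain_def)
  ultimately show ?case
    by (simp add: phi_1)
next
  case (Suc M)
  show ?case
  proof (cases "even t")
    case True
    then obtain u where t: "t = 2 * u" ..
    then have "phi k (2 ^ Suc M + t) = phi k (2 ^ M + u)"
      using phi_even[of "2 ^ M + u"] by simp
    then show ?thesis
      using Suc t by (simp add: card_bsum_gain_even)
  next
    case False
    then obtain u where t: "t = Suc (2 * u)"
      using oddE by fastforce
    then have "phi k (2 ^ Suc M + t) = phi (k - 1) (2 ^ M + u) / 2 + phi (k + 1) (2 ^ M + Suc u) / 2"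
      using phi_odd[of "2 ^ M + u"] by simp
    moreover have "Suc u \<le> 2 ^ M"
      using Suc.prems t by simp
    ultimately show ?thesis
      using Suc.IH[of u "k - 1"] Suc.IH[of "Suc u" "k + 1"] t
      by (simp add: card_bsum_gain_odd add_divide_distrib)
  qed
qed

lemma p_eq_card_bsum_le:
  assumes "t \<le> 2 ^ M"
  shows "p (2 ^ M + t) = card {r. r < 2 ^ M \<and> bsum r \<le> bsum ((r + t) mod 2 ^ M)} / 2 ^ M"
proof -
  let ?A = "\<lambda>k. {r. r < 2 ^ M \<and> bsum_gain M t r = int k}"
  have "?A k = {}" if "k \<notin> {..M}" for k
  proof -
    have "int M < int k"
      using that by simp
    then have "bsum_gain M t r \<noteq> int k" for r
      using bsum_gain_le[of M t r] by linarith
    then show ?thesis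
      by auto
  qed
  then have "p (2 ^ M + t) = (\<Sum>k\<le>M. phi (int k) (2 ^ M + t))"
    unfolding p_def by (intro suminf_finite) (auto simp: phi_eq_card_bsum_gain[OF assms])
  also have "\<dots> = (\<Sum>k\<le>M. card (?A k)) / 2 ^ M"
    by (simp add: phi_eq_card_bsum_gain[OF assms] sum_divide_distrib)
  also have "(\<Sum>k\<le>M. card (?A k)) = card (\<Union>k\<le>M. ?A k)"
    by (rule card_UN_disjoint[symmetric]) auto
  also have "(\<Union>k\<le>M. ?A k) = {r. r < 2 ^ M \<and> bsum r \<le> bsum ((r + t) mod 2 ^ M)}"
  proof (intro set_eqI iffI)
    fix r
    assume "r \<in> {r. r < 2 ^ M \<and> bsum r \<le> bsum ((r + t) mod 2 ^ M)}"
    then show "r \<in> (\<Union>k\<le>M. ?A k)"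
      using bsum_gain_le[of M t r] by (auto simp: bsum_gain_def intro!: bexI[of _ "nat (bsum_gain M t r)"])
  qed (auto simp: bsum_gain_def)
  finally show ?thesis .
qed

lemma card_bsum_le_shift_ge_half:
  assumes "\<forall>t::nat. t \<ge> 1 \<longrightarrow> p t \<ge> 1/2" and "t \<le> 2 ^ M"
  shows "2 ^ M \<le> 2 * card {r. r < 2 ^ M \<and> bsum r \<le> bsum ((r + t) mod 2 ^ M)}"
proof -
  have "1 \<le> 2 ^ M + t"
    using one_le_power[of "2::nat" M] by linarith
  then have "1/2 \<le> p (2 ^ M + t)"
    using assms(1) by blast
  then have "1/2 \<le> card {r. r < 2 ^ M \<and> bsum r \<le> bsum ((r + t) mod 2 ^ M)} / (2::real) ^ M"
    by (simp only: p_eq_card_bsum_le[OF assms(2)])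
  then have "(2::real) ^ M \<le> 2 * card {r. r < 2 ^ M \<and> bsum r \<le> bsum ((r + t) mod 2 ^ M)}"
    by (simp add: field_simps)
  then show ?thesis
    by (metis of_nat_le_iff of_nat_mult of_nat_numeral of_nat_power)
qed

lemma card_mod_shift:
  fixes K t :: nat
  assumes "t \<le> K"
  shows "card {r. r < K \<and> R ((r + t) mod K) r} = card {m. m < K \<and> R m ((m + (K - t)) mod K)}"
proof (rule bij_betw_same_card, rule bij_betw_byWitness)
  have "((a + t) mod K + (K - t)) mod K = a mod K" for a
    using assms mod_add_left_eq[of "a + t" K "K - t"] by simp
  moreover have "((a + (K - t)) mod K + t) mod K = a mod K" for a
    using assms mod_add_left_eq[of "a + (K - t)" K t] by simp
  ultimately show "\<forall>r\<in>{r. r < K \<and> R ((r + t) mod K) r}. ((r + t) mod K + (K - t)) mod K = r"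
    and "\<forall>m\<in>{m. m < K \<and> R m ((m + (K - t)) mod K)}. ((m + (K - t)) mod K + t) mod K = m"
    by auto
  then show "(\<lambda>r. (r + t) mod K) ` {r. r < K \<and> R ((r + t) mod K) r} \<subseteq> {m. m < K \<and> R m ((m + (K - t)) mod K)}"
    and "(\<lambda>m. (m + (K - t)) mod K) ` {m. m < K \<and> R m ((m + (K - t)) mod K)} \<subseteq> {r. r < K \<and> R ((r + t) mod K) r}"
    by auto
qed

lemma card_bsum_less_shift_le_half:
  assumes "\<forall>t::nat. t \<ge> 1 \<longrightarrow> p t \<ge> 1/2" and "t \<le> 2 ^ M"
  shows "2 * card {r. r < 2 ^ M \<and> bsum r < bsum ((r + t) mod 2 ^ M)} \<le> 2 ^ M"
proof -
  let ?less = "{r. r < 2 ^ M \<and> bsum r < bsum ((r + t) mod 2 ^ M)}"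
  let ?ge = "{r. r < 2 ^ M \<and> bsum ((r + t) mod 2 ^ M) \<le> bsum r}"
  have "card ?less + card ?ge = card (?less \<union> ?ge)"
    by (rule card_Un_disjoint[symmetric]) auto
  also have "?less \<union> ?ge = {..<2 ^ M}"
    by auto
  finally have "card ?less + card ?ge = 2 ^ M"
    by simp
  moreover have "card ?ge = card {m. m < 2 ^ M \<and> bsum m \<le> bsum ((m + (2 ^ M - t)) mod 2 ^ M)}"
    using card_mod_shift[OF assms(2), of "\<lambda>m r. bsum m \<le> bsum r"] by simp
  moreover have "2 ^ M \<le> 2 * card {m. m < 2 ^ M \<and> bsum m \<le> bsum ((m + (2 ^ M - t)) mod 2 ^ M)}"
    using card_bsum_le_shift_ge_half[OF assms(1), of "2 ^ M - t"] by simp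
  ultimately show ?thesis
    by linarith
qed

subsection \<open>Densities of sets that are periodic up to a few exceptions\<close>

lemma card_less_mult_eq_sum:
  fixes Q K :: nat
  shows "card {n. n < Q * K \<and> P n} = (\<Sum>q<Q. card {r. r < K \<and> P (q * K + r)})"
proof (induction Q)
  case (Suc Q)
  let ?block = "{r. r < K \<and> P (Q * K + r)}"
  have "{n. n < Suc Q * K \<and> P n} \<subseteq> {n. n < Q * K \<and> P n} \<union> (\<lambda>r. Q * K + r) ` ?block"
  proof
    fix n
    assume n: "n \<in> {n. n < Suc Q * K \<and> P n}"
    show "n \<in> {n. n < Q * K \<and> P n} \<union> (\<lambda>r. Q * K + r) ` ?block"
    proof (cases "n < Q * K")
      case False
      then have "n = Q * K + (n - Q * K)" and "n - Q * K < K"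
        using n by auto
      then show ?thesis
        using n by (intro UnI2 image_eqI[of _ _ "n - Q * K"]) auto
    qed (use n in blast)
  qed
  then have "{n. n < Suc Q * K \<and> P n} = {n. n < Q * K \<and> P n} \<union> (\<lambda>r. Q * K + r) ` ?block"
    by auto
  moreover have "card ({n. n < Q * K \<and> P n} \<union> (\<lambda>r. Q * K + r) ` ?block) =
      card {n. n < Q * K \<and> P n} + card ?block"
    by (subst card_Un_disjoint) (auto simp: card_image)
  ultimately show ?case
    using Suc by simp
qed simp

lemma card_le_card_add_exceptions:
  fixes K T :: nat
  assumes "\<And>r. r + T < K \<Longrightarrow> P r = G r"
  shows "card {r. r < K \<and> P r} \<le> card {r. r < K \<and> G r} + T"
proof -
  have "card {r. r < K \<and> P r} \<le> card ({r. r < K \<and> G r} \<union> {K - T..<K})"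
    using assms by (intro card_mono) force+
  also have "\<dots> \<le> card {r. r < K \<and> G r} + T"
    using card_Un_le[of "{r. r < K \<and> G r}" "{K - T..<K}"] by simp
  finally show ?thesis .
qed

lemma card_density_estimate:
  fixes P G :: "nat \<Rightarrow> bool" and K N T :: nat
  assumes K: "0 < K" and N: "0 < N"
    and periodic: "\<And>q r. r + T < K \<Longrightarrow> P (q * K + r) = G r"
  shows "\<bar>card {n. n < N \<and> P n} / N - card {r. r < K \<and> G r} / K\<bar> \<le> T / K + 2 * K / N"
proof -
  txt \<open>Each of the \<open>Q\<close> complete blocks deviates from \<open>g\<close> by at most \<open>T\<close>, the incomplete
    last block contributes at most \<open>K\<close>.\<close>
  define Q where "Q = N div K"
  define b where "b q = card {r. r < K \<and> P (q * K + r)}" for q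
  define c where "c = card {n. n < N \<and> P n}"
  define c0 where "c0 = card {n. n < Q * K \<and> P n}"
  define g where "g = card {r. r < K \<and> G r}"
  have QK: "Q * K \<le> N" "N < Q * K + K"
    using K mod_less_divisor[OF K, of N] div_mult_mod_eq[of N K] unfolding Q_def by linarith+
  have "c0 \<le> c"
    unfolding c0_def c_def using QK by (intro card_mono) auto
  have "c \<le> card ({n. n < Q * K \<and> P n} \<union> {Q * K..<N})"
    unfolding c_def by (intro card_mono) auto
  also have "\<dots> \<le> c0 + K"
    using card_Un_le[of "{n. n < Q * K \<and> P n}" "{Q * K..<N}"] QK unfolding c0_def by simp
  finally have "c \<le> c0 + K" .
  have "g \<le> K"
    using card_mono[of "{..<K}" "{r. r < K \<and> G r}"] unfolding g_def by auto
  have "\<bar>real (b q) - g\<bar> \<le> T" for q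
    using card_le_card_add_exceptions[of T K "\<lambda>r. P (q * K + r)" G]
      card_le_card_add_exceptions[of T K G "\<lambda>r. P (q * K + r)"] periodic
    unfolding b_def g_def by fastforce
  then have "\<bar>\<Sum>q<Q. real (b q) - g\<bar> \<le> Q * T"
    by (intro order_trans[OF sum_abs] order_trans[OF sum_bounded_above]) auto
  then have c0: "\<bar>real c0 - Q * g\<bar> \<le> Q * T"
    by (simp add: c0_def card_less_mult_eq_sum b_def sum_subtractf)
  have "real c * K - real g * N =
      (real c - c0) * K + (real c0 - Q * g) * K + g * (real (Q * K) - N)"
    by (simp add: algebra_simps)
  moreover have "\<bar>(real c - c0) * K\<bar> \<le> real K * K"
    using \<open>c0 \<le> c\<close> \<open>c \<le> c0 + K\<close> by (simp add: abs_mult mult_right_mono)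
  moreover have "\<bar>(real c0 - Q * g) * K\<bar> \<le> real T * N"
  proof -
    have "\<bar>(real c0 - Q * g) * K\<bar> \<le> real Q * T * K"
      using c0 by (simp add: abs_mult mult_right_mono)
    also have "\<dots> = real T * real (Q * K)"
      by simp
    also have "\<dots> \<le> real T * N"
      using mult_left_mono[OF of_nat_mono[OF QK(1)], of "real T"] by simp
    finally show ?thesis .
  qed
  moreover have "\<bar>g * (real (Q * K) - N)\<bar> \<le> real K * K"
  proof -
    have "real (Q * K) \<le> N" "real N < real (Q * K) + K"
      using QK by (metis of_nat_le_iff, metis of_nat_add of_nat_less_iff)
    then have "\<bar>real (Q * K) - N\<bar> \<le> K"
      by linarith
    then show ?thesis
      using \<open>g \<le> K\<close> unfolding abs_mult by (intro mult_mono) auto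
  qed
  ultimately have "\<bar>real c * K - real g * N\<bar> \<le> 2 * real K * K + real T * N"
    by linarith
  then have "\<bar>real c * K - real g * N\<bar> / (real N * K) \<le> (2 * real K * K + real T * N) / (real N * K)"
    using K N by (intro divide_right_mono) auto
  then show ?thesis
    using K N unfolding c_def g_def by (simp add: field_simps abs_divide[symmetric])
qed

lemma convergent_lim_in_closed:
  fixes x :: "nat \<Rightarrow> real"
  assumes "closed S"
    and approx: "\<And>e. 0 < e \<Longrightarrow> \<exists>g\<in>S. \<forall>\<^sub>F N in sequentially. \<bar>x N - g\<bar> \<le> e"
  shows "convergent x \<and> lim x \<in> S"
proof
  show "convergent x"
  proof (rule Cauchy_convergent, rule metric_CauchyI)
    fix e :: real
    assume "0 < e"
    then obtain g N0 where "\<forall>N\<ge>N0. \<bar>x N - g\<bar> \<le> e / 3"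
      using approx[of "e / 3"] by (auto simp: eventually_sequentially)
    then have "dist (x m) (x n) < e" if "N0 \<le> m" "N0 \<le> n" for m n
    proof -
      have "\<bar>x m - g\<bar> \<le> e / 3" "\<bar>x n - g\<bar> \<le> e / 3"
        using that \<open>\<forall>N\<ge>N0. _\<close> by auto
      then show ?thesis
        using \<open>0 < e\<close> unfolding dist_real_def abs_le_iff abs_less_iff by linarith
    qed
    then show "\<exists>M. \<forall>m\<ge>M. \<forall>n\<ge>M. dist (x m) (x n) < e"
      by blast
  qed
  then have lim: "x \<longlonglongrightarrow> lim x"
    by (simp add: convergent_LIMSEQ_iff)
  have "\<exists>g\<in>S. dist g (lim x) < e" if "0 < e" for e
  proof -
    obtain g where "g \<in> S" and g: "\<forall>\<^sub>F N in sequentially. \<bar>x N - g\<bar> \<le> e / 2"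
      using approx[of "e / 2"] \<open>0 < e\<close> by auto
    have "(\<lambda>N. \<bar>x N - g\<bar>) \<longlonglongrightarrow> \<bar>lim x - g\<bar>"
      by (intro tendsto_intros lim)
    then have "\<bar>lim x - g\<bar> \<le> e / 2"
      using g by (rule tendsto_upperbound) simp
    then show ?thesis
      using \<open>g \<in> S\<close> \<open>0 < e\<close> by (intro bexI[of _ g]) (auto simp: dist_real_def abs_minus_commute)
  qed
  then show "lim x \<in> S"
    using closed_approachable[OF \<open>closed S\<close>] by blast
qed

lemma density_lim_in_closed:
  fixes P :: "nat \<Rightarrow> bool" and G :: "nat \<Rightarrow> nat \<Rightarrow> bool" and T :: nat
  assumes "closed S"
    and periodic: "\<And>M q r. r + T < 2 ^ M \<Longrightarrow> P (q * 2 ^ M + r) = G M r"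
    and blocks: "\<And>M. T \<le> 2 ^ M \<Longrightarrow> card {r. r < 2 ^ M \<and> G M r} / 2 ^ M \<in> S"
  shows "convergent (\<lambda>N. card {n. n < N \<and> P n} / N) \<and> lim (\<lambda>N. card {n. n < N \<and> P n} / N) \<in> S"
proof (rule convergent_lim_in_closed[OF \<open>closed S\<close>])
  fix e :: real
  assume "0 < e"
  have "\<forall>\<^sub>F M in sequentially. T \<le> M \<and> T / 2 ^ M < e / 2"
    using eventually_ge_at_top[of T]
      order_tendstoD(2)[OF LIMSEQ_divide_realpow_zero[of 2 "real T"], of "e / 2"] \<open>0 < e\<close>
    by (auto intro: eventually_conj)
  then obtain M where "T \<le> M" and M: "T / 2 ^ M < e / 2"
    by (auto simp: eventually_sequentially)
  then have "T \<le> 2 ^ M"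
    using less_exp[of M] by linarith
  have "\<forall>\<^sub>F N in sequentially. 0 < N \<and> 2 * 2 ^ M / real N < e / 2"
    using eventually_gt_at_top[of 0]
      order_tendstoD(2)[OF lim_const_over_n[of "2 * 2 ^ M"], of "e / 2"] \<open>0 < e\<close>
    by (auto intro: eventually_conj)
  then have "\<forall>\<^sub>F N in sequentially.
      \<bar>card {n. n < N \<and> P n} / N - card {r. r < 2 ^ M \<and> G M r} / 2 ^ M\<bar> \<le> e"
  proof (rule eventually_mono)
    fix N :: nat
    assume N: "0 < N \<and> 2 * 2 ^ M / real N < e / 2"
    then have "\<bar>card {n. n < N \<and> P n} / N - card {r. r < 2 ^ M \<and> G M r} / 2 ^ M\<bar>
        \<le> T / 2 ^ M + 2 * 2 ^ M / N"
      using card_density_estimate[of "2 ^ M" N T P "G M"] periodic by simp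
    then show "\<bar>card {n. n < N \<and> P n} / N - card {r. r < 2 ^ M \<and> G M r} / 2 ^ M\<bar> \<le> e"
      using N M by linarith
  qed
  then show "\<exists>g\<in>S. \<forall>\<^sub>F N in sequentially. \<bar>card {n. n < N \<and> P n} / N - g\<bar> \<le> e"
    using blocks[OF \<open>T \<le> 2 ^ M\<close>] by blast
qed

theorem lemma3p2:
  assumes "\<forall>t::nat. t \<ge> 1 \<longrightarrow> p t \<ge> 1/2"
  shows "\<forall>t::nat. t \<ge> 1 \<longrightarrow> ctilde t \<le> 1/2 \<and> 1/2 \<le> c t"
proof (intro allI impI conjI)
  fix t :: nat
  have "lim (\<lambda>N. card {n. n < N \<and> bsum n < bsum (n + t)} / N) \<in> {..1/2}"
  proof (rule conjunct2[OF density_lim_in_closed])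
    fix M
    assume "t \<le> 2 ^ M"
    then have "real (2 * card {r. r < 2 ^ M \<and> bsum r < bsum ((r + t) mod 2 ^ M)}) \<le> real (2 ^ M)"
      using card_bsum_less_shift_le_half[OF assms] by (simp only: of_nat_le_iff)
    then show "card {r. r < 2 ^ M \<and> bsum r < bsum ((r + t) mod 2 ^ M)} / 2 ^ M \<in> {..1/2::real}"
      by (simp add: field_simps)
  qed (use bsum_mult_power_add bsum_add_mult_power_add in auto)
  then show "ctilde t \<le> 1/2"
    by (simp add: ctilde_def)
  have "lim (\<lambda>N. card {n. n < N \<and> bsum n \<le> bsum (n + t)} / N) \<in> {1/2..}"
  proof (rule conjunct2[OF density_lim_in_closed])
    fix M
    assume "t \<le> 2 ^ M"
    then have "real (2 ^ M) \<le> real (2 * card {r. r < 2 ^ M \<and> bsum r \<le> bsum ((r + t) mod 2 ^ M)})"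
      using card_bsum_le_shift_ge_half[OF assms] by (simp only: of_nat_le_iff)
    then show "card {r. r < 2 ^ M \<and> bsum r \<le> bsum ((r + t) mod 2 ^ M)} / 2 ^ M \<in> {1/2::real..}"
      by (simp add: field_simps)
  qed (use bsum_mult_power_add bsum_add_mult_power_add in auto)
  then show "1/2 \<le> c t"
    by (simp add: c_def)
qed

end
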